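(* Let $V$ be a finite-dimensional real vector space with a non-degenerate inner product $g$, and $F\in\Lambda^5V^*$ a 5-form satisfying, for all $X,Y\in V$, $\iota_XF_L\wedge\iota_YF^L=0$ and $\iota_XF_L\wedge F^L=0$. Then $\iota_Y\iota_XF_L\wedge F^L=0$ and $\iota_Z\iota_Y\iota_XF_L\wedge F^L=0$ for all $X,Y,Z\in V$.
   Context: For a basis $e_L$ of $V$, $F_L=\iota_{e_L}F$, and expressions like $\alpha_L\wedge\beta^L$ denote the contraction $\sum_{L,K}g^{LK}\alpha_L\wedge\beta_K$ with the inverse metric. $\iota_X$ is interior multiplication by $X$. *)

theory Defs
  imports Complex_Main
begin

text \<open>Coordinate model: V = R^n with standard basis e_0,...,e_{n-1}; a vector is
  given by its components (X i for i < n).  A differential form is given by its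
  components in the basis e^I = e^{i_1} \<and> ... \<and> e^{i_k} (i_1 < ... < i_k) of the
  exterior algebra of V^*, i.e. as a function on index sets I \<subseteq> {0..<n}.\<close>

type_synonym vec = "nat \<Rightarrow> real"
type_synonym form = "nat set \<Rightarrow> real"

definition is_kform :: "nat \<Rightarrow> nat \<Rightarrow> form \<Rightarrow> bool" where
  "is_kform n k \<alpha> \<longleftrightarrow> (\<forall>I. \<alpha> I \<noteq> 0 \<longrightarrow> I \<subseteq> {..<n} \<and> card I = k)"

text \<open>Sign of e^I \<and> e^J = sign * e^(I \<union> J) for disjoint I, J.\<close>
definition shuffle_sign :: "nat set \<Rightarrow> nat set \<Rightarrow> real" where
  "shuffle_sign I J = (-1) ^ card {(i, j). i \<in> I \<and> j \<in> J \<and> j < i}"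

definition wedge :: "nat \<Rightarrow> form \<Rightarrow> form \<Rightarrow> form" where
  "wedge n \<alpha> \<beta> = (\<lambda>K. if K \<subseteq> {..<n}
      then (\<Sum>I\<in>Pow K. shuffle_sign I (K - I) * \<alpha> I * \<beta> (K - I)) else 0)"

text \<open>Interior multiplication: \<iota>_{e_i} e^I = (-1)^{#{j \<in> I. j < i}} e^{I - {i}} if i \<in> I, else 0.\<close>
definition interior :: "nat \<Rightarrow> vec \<Rightarrow> form \<Rightarrow> form" where
  "interior n X \<alpha> = (\<lambda>K. if K \<subseteq> {..<n}
      then (\<Sum>i<n. if i \<in> K then 0
              else X i * (-1) ^ card {j\<in>K. j < i} * \<alpha> (insert i K)) else 0)"

definition basis_vec :: "nat \<Rightarrow> vec" where
  "basis_vec i = (\<lambda>j. if j = i then 1 else 0)"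

text \<open>Contraction \<alpha>_L \<and> \<beta>^L = \<Sum>_{L,K} g^{LK} \<alpha>_L \<and> \<beta>_K, where \<alpha>_L = A L and \<beta>_K = B K,
  and ginv is the inverse metric.\<close>
definition contr_wedge :: "nat \<Rightarrow> (nat \<Rightarrow> nat \<Rightarrow> real) \<Rightarrow> (nat \<Rightarrow> form) \<Rightarrow> (nat \<Rightarrow> form) \<Rightarrow> form" where
  "contr_wedge n ginv A B = (\<lambda>K. \<Sum>L<n. \<Sum>M<n. ginv L M * wedge n (A L) (B M) K)"

definition F_idx :: "nat \<Rightarrow> form \<Rightarrow> nat \<Rightarrow> form" where
  "F_idx n F L = interior n (basis_vec L) F"

definition nondeg_metric_with_inverse :: "nat \<Rightarrow> (nat \<Rightarrow> nat \<Rightarrow> real) \<Rightarrow> (nat \<Rightarrow> nat \<Rightarrow> real) \<Rightarrow> bool" where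
  "nondeg_metric_with_inverse n g ginv \<longleftrightarrow>
     (\<forall>i<n. \<forall>j<n. g i j = g j i) \<and>
     (\<forall>i<n. \<forall>j<n. (\<Sum>k<n. g i k * ginv k j) = (if i = j then 1 else 0))"

end

theory Submission
  imports Defs
begin

(* Interior multiplication is an antiderivation, two interior multiplications anticommute, and the
   wedge product is graded commutative; since g^{-1} is symmetric, the contraction
   A_L \<and> B^L inherits graded commutativity.  Applying \<iota>_Y to the hypothesis
   \<iota>_X F_L \<and> F^L = 0 and using \<iota>_X F_L \<and> \<iota>_Y F^L = 0 gives the first claim.
   For the second, T(X,Y,Z) = \<iota>_Y \<iota>_X F_L \<and> \<iota>_Z F^L is antisymmetric in X, Y, and
   applying \<iota>_Y to \<iota>_X F_L \<and> \<iota>_Z F^L = 0 shows that it is symmetric in X, Z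
   (F_L has even degree 4), so T = 0; applying \<iota>_Z to the first claim then gives
   \<iota>_Z \<iota>_Y \<iota>_X F_L \<and> F^L = -T(X,Y,Z) = 0. *)

section \<open>Shuffle signs\<close>

definition inversions :: "nat set \<Rightarrow> nat set \<Rightarrow> (nat \<times> nat) set" where
  "inversions A B = {(a, b). a \<in> A \<and> b \<in> B \<and> b < a}"

lemma shuffle_sign_inversions: "shuffle_sign A B = (-1) ^ card (inversions A B)"
  by (simp add: shuffle_sign_def inversions_def)

lemma finite_inversions: "finite A \<Longrightarrow> finite B \<Longrightarrow> finite (inversions A B)"
  by (rule finite_subset[of _ "A \<times> B"]) (auto simp: inversions_def)

lemma shuffle_sign_singleton_left: "shuffle_sign {i} K = (-1) ^ card {j \<in> K. j < i}"
proof -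
  have "inversions {i} K = Pair i ` {j \<in> K. j < i}"
    by (auto simp: inversions_def)
  then show ?thesis
    by (simp add: shuffle_sign_inversions card_image inj_on_def)
qed

lemma shuffle_sign_square: "shuffle_sign A B * shuffle_sign A B = 1"
  by (simp add: shuffle_sign_def power_add[symmetric])

lemma shuffle_sign_Un_left:
  assumes "finite A" "finite B" "finite C" "A \<inter> B = {}"
  shows "shuffle_sign (A \<union> B) C = shuffle_sign A C * shuffle_sign B C"
proof -
  have "inversions (A \<union> B) C = inversions A C \<union> inversions B C"
    by (auto simp: inversions_def)
  moreover have "inversions A C \<inter> inversions B C = {}"
    using assms(4) by (auto simp: inversions_def)
  ultimately show ?thesis
    using assms by (simp add: shuffle_sign_inversions card_Un_disjoint finite_inversions power_add)
qed

lemma shuffle_sign_Un_right: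
  assumes "finite A" "finite B" "finite C" "B \<inter> C = {}"
  shows "shuffle_sign A (B \<union> C) = shuffle_sign A B * shuffle_sign A C"
proof -
  have "inversions A (B \<union> C) = inversions A B \<union> inversions A C"
    by (auto simp: inversions_def)
  moreover have "inversions A B \<inter> inversions A C = {}"
    using assms(4) by (auto simp: inversions_def)
  ultimately show ?thesis
    using assms by (simp add: shuffle_sign_inversions card_Un_disjoint finite_inversions power_add)
qed

lemma shuffle_sign_swap:
  assumes "finite A" "finite B" "A \<inter> B = {}"
  shows "shuffle_sign A B * shuffle_sign B A = (-1) ^ (card A * card B)"
proof -
  have "A \<times> B = inversions A B \<union> prod.swap ` inversions B A"
    using assms(3) by (auto simp: inversions_def disjoint_iff) (metis linorder_neqE_nat)
  moreover have "inversions A B \<inter> prod.swap ` inversions B A = {}"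
    by (auto simp: inversions_def)
  ultimately have "card A * card B = card (inversions A B) + card (inversions B A)"
    using assms by (simp add: card_cartesian_product[symmetric] card_Un_disjoint
        finite_inversions card_image)
  then show ?thesis
    by (simp add: shuffle_sign_inversions power_add)
qed

lemma shuffle_sign_insert_left:
  "finite I \<Longrightarrow> finite J \<Longrightarrow> i \<notin> I \<Longrightarrow>
    shuffle_sign (insert i I) J = shuffle_sign {i} J * shuffle_sign I J"
  using shuffle_sign_Un_left[of "{i}" I J] by simp

lemma shuffle_sign_insert_right:
  "finite I \<Longrightarrow> finite J \<Longrightarrow> i \<notin> J \<Longrightarrow>
    shuffle_sign I (insert i J) = shuffle_sign I {i} * shuffle_sign I J"
  using shuffle_sign_Un_right[of I "{i}" J] by simp

lemma shuffle_sign_insert_left_mult_singleton: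
  assumes "finite I" "finite J" "i \<notin> I"
  shows "shuffle_sign (insert i I) J * shuffle_sign {i} J = shuffle_sign I J"
proof -
  have "shuffle_sign (insert i I) J * shuffle_sign {i} J
      = shuffle_sign I J * (shuffle_sign {i} J * shuffle_sign {i} J)"
    unfolding shuffle_sign_insert_left[OF assms] by (simp only: mult_ac)
  then show ?thesis
    by (simp add: shuffle_sign_square)
qed

lemma shuffle_sign_insert_right_mult_singleton:
  assumes "finite I" "finite J" "i \<notin> I" "i \<notin> J"
  shows "shuffle_sign I (insert i J) * shuffle_sign {i} I = (-1) ^ card I * shuffle_sign I J"
proof -
  have "shuffle_sign I (insert i J) * shuffle_sign {i} I
      = shuffle_sign I {i} * shuffle_sign {i} I * shuffle_sign I J"
    unfolding shuffle_sign_insert_right[OF assms(1,2,4)] by (simp only: mult_ac)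
  then show ?thesis
    using shuffle_sign_swap[of I "{i}"] assms by simp
qed

lemma shuffle_sign_singletons: "shuffle_sign {i} {j} = (if j < i then -1 else 1)"
proof -
  have "{x \<in> {j}. x < i} = (if j < i then {j} else {})"
    by auto
  then show ?thesis
    by (simp add: shuffle_sign_singleton_left)
qed

section \<open>Interior multiplication\<close>

definition is_homogeneous :: "nat \<Rightarrow> form \<Rightarrow> bool" where
  "is_homogeneous k \<alpha> \<longleftrightarrow> (\<forall>I. \<alpha> I \<noteq> 0 \<longrightarrow> card I = k)"

(* The interior product with e_i, without the truncation to {..<n} built into interior. *)
definition basis_interior :: "nat \<Rightarrow> form \<Rightarrow> form" where
  "basis_interior i \<alpha> = (\<lambda>K. if i \<in> K then 0 else shuffle_sign {i} K * \<alpha> (insert i K))"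

lemma interior_eq_sum_basis_interior:
  "interior n X \<alpha> K = (if K \<subseteq> {..<n} then \<Sum>i<n. X i * basis_interior i \<alpha> K else 0)"
  unfolding interior_def basis_interior_def shuffle_sign_singleton_left
  by (auto intro!: sum.cong)

lemma is_homogeneous_interior:
  assumes "is_homogeneous k \<alpha>"
  shows "is_homogeneous (k - 1) (interior n X \<alpha>)"
  unfolding is_homogeneous_def
proof (intro allI impI)
  fix K
  assume nonzero: "interior n X \<alpha> K \<noteq> 0"
  then have K: "K \<subseteq> {..<n}"
    unfolding interior_eq_sum_basis_interior by (simp split: if_splits)
  with nonzero have "(\<Sum>i<n. X i * basis_interior i \<alpha> K) \<noteq> 0"
    unfolding interior_eq_sum_basis_interior by simp
  then obtain i where "basis_interior i \<alpha> K \<noteq> 0"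
    using sum.not_neutral_contains_not_neutral by force
  then have "i \<notin> K" "\<alpha> (insert i K) \<noteq> 0"
    unfolding basis_interior_def by (simp_all split: if_splits)
  moreover have "finite K"
    using K finite_subset by blast
  ultimately show "card K = k - 1"
    using assms unfolding is_homogeneous_def by (metis card_insert_disjoint diff_Suc_1)
qed

lemma wedge_insert:
  assumes "insert i K \<subseteq> {..<n}" "i \<notin> K"
  shows "wedge n \<alpha> \<beta> (insert i K) =
    (\<Sum>I\<in>Pow K. shuffle_sign (insert i I) (K - I) * \<alpha> (insert i I) * \<beta> (K - I)
               + shuffle_sign I (insert i (K - I)) * \<alpha> I * \<beta> (insert i (K - I)))"
proof -
  let ?t = "\<lambda>I. shuffle_sign I (insert i K - I) * \<alpha> I * \<beta> (insert i K - I)"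
  have fin: "finite K"
    using assms(1) finite_subset by auto
  have inj: "inj_on (insert i) (Pow K)"
    using assms(2) by (auto simp: inj_on_def)
  have disj: "Pow K \<inter> insert i ` Pow K = {}"
    using assms(2) by auto
  have "wedge n \<alpha> \<beta> (insert i K) = sum ?t (Pow K) + sum ?t (insert i ` Pow K)"
    unfolding wedge_def Pow_insert using assms(1) fin disj
    by (simp add: sum.union_disjoint)
  also have "sum ?t (insert i ` Pow K) =
      (\<Sum>I\<in>Pow K. shuffle_sign (insert i I) (K - I) * \<alpha> (insert i I) * \<beta> (K - I))"
    unfolding sum.reindex[OF inj] using assms(2) by (intro sum.cong) auto
  also have "sum ?t (Pow K) =
      (\<Sum>I\<in>Pow K. shuffle_sign I (insert i (K - I)) * \<alpha> I * \<beta> (insert i (K - I)))"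
    using assms(2) by (intro sum.cong) (auto simp: insert_Diff_if)
  finally show ?thesis
    by (simp add: sum.distrib)
qed

lemma basis_interior_wedge_notin:
  assumes hom: "is_homogeneous k \<alpha>" and K: "insert i K \<subseteq> {..<n}" and i: "i \<notin> K"
  shows "basis_interior i (wedge n \<alpha> \<beta>) K =
    wedge n (basis_interior i \<alpha>) \<beta> K + (-1) ^ k * wedge n \<alpha> (basis_interior i \<beta>) K"
proof -
  have fK: "finite K"
    using K finite_subset[OF _ finite_lessThan] by blast
  have termwise:
    "shuffle_sign {i} K * (shuffle_sign (insert i I) (K - I) * \<alpha> (insert i I) * \<beta> (K - I)
        + shuffle_sign I (insert i (K - I)) * \<alpha> I * \<beta> (insert i (K - I)))
     = shuffle_sign I (K - I) * basis_interior i \<alpha> I * \<beta> (K - I)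
        + (-1) ^ k * (shuffle_sign I (K - I) * \<alpha> I * basis_interior i \<beta> (K - I))"
    if I: "I \<subseteq> K" for I
  proof -
    let ?J = "K - I"
    have fin: "finite I" "finite ?J"
      using I fK finite_subset by auto
    have iI: "i \<notin> I" "i \<notin> ?J"
      using I i by auto
    have "I \<union> ?J = K"
      using I by blast
    then have sK: "shuffle_sign {i} K = shuffle_sign {i} I * shuffle_sign {i} ?J"
      using shuffle_sign_Un_right[of "{i}" I ?J] fin by simp
    have left: "shuffle_sign {i} K * shuffle_sign (insert i I) ?J
        = shuffle_sign I ?J * shuffle_sign {i} I"
      using shuffle_sign_insert_left_mult_singleton[OF fin iI(1)] by (simp add: sK mult_ac)
    have right: "shuffle_sign {i} K * shuffle_sign I (insert i ?J)
        = (-1) ^ card I * (shuffle_sign I ?J * shuffle_sign {i} ?J)"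
      using shuffle_sign_insert_right_mult_singleton[OF fin iI] by (simp add: sK mult_ac)
    have "\<alpha> I \<noteq> 0 \<Longrightarrow> card I = k"
      using hom by (simp add: is_homogeneous_def)
    then show ?thesis
      using iI left right unfolding basis_interior_def
      by (cases "\<alpha> I = 0") (simp_all add: algebra_simps)
  qed
  have "basis_interior i (wedge n \<alpha> \<beta>) K =
    (\<Sum>I\<in>Pow K. shuffle_sign {i} K * (shuffle_sign (insert i I) (K - I) * \<alpha> (insert i I) * \<beta> (K - I)
        + shuffle_sign I (insert i (K - I)) * \<alpha> I * \<beta> (insert i (K - I))))"
    using K i by (simp add: basis_interior_def wedge_insert sum_distrib_left)
  also have "\<dots> = (\<Sum>I\<in>Pow K. shuffle_sign I (K - I) * basis_interior i \<alpha> I * \<beta> (K - I)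
        + (-1) ^ k * (shuffle_sign I (K - I) * \<alpha> I * basis_interior i \<beta> (K - I)))"
    using termwise by (intro sum.cong) auto
  also have "\<dots> = wedge n (basis_interior i \<alpha>) \<beta> K + (-1) ^ k * wedge n \<alpha> (basis_interior i \<beta>) K"
    using K by (simp add: wedge_def sum.distrib sum_distrib_left)
  finally show ?thesis .
qed

lemma basis_interior_wedge_in:
  assumes hom: "is_homogeneous k \<alpha>" and K: "K \<subseteq> {..<n}" and i: "i \<in> K"
  shows "wedge n (basis_interior i \<alpha>) \<beta> K + (-1) ^ k * wedge n \<alpha> (basis_interior i \<beta>) K = 0"
proof -
  define K' where "K' = K - {i}"
  have K_eq: "K = insert i K'" and i': "i \<notin> K'"
    using i by (auto simp: K'_def)
  have fK': "finite K'"
    using K K_eq finite_subset[OF _ finite_lessThan] by blast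
  have termwise:
    "shuffle_sign (insert i I) (K' - I) * basis_interior i \<alpha> (insert i I) * \<beta> (K' - I)
       + shuffle_sign I (insert i (K' - I)) * basis_interior i \<alpha> I * \<beta> (insert i (K' - I))
     + (-1) ^ k * (shuffle_sign (insert i I) (K' - I) * \<alpha> (insert i I) * basis_interior i \<beta> (K' - I)
       + shuffle_sign I (insert i (K' - I)) * \<alpha> I * basis_interior i \<beta> (insert i (K' - I))) = 0"
    if I: "I \<subseteq> K'" for I
  proof -
    let ?J = "K' - I"
    have fin: "finite I" "finite ?J"
      using I fK' finite_subset by auto
    have iI: "i \<notin> I" "i \<notin> ?J"
      using I i' by auto
    have "\<alpha> (insert i I) \<noteq> 0 \<Longrightarrow> k = Suc (card I)"
      using hom fin iI unfolding is_homogeneous_def by (metis card_insert_disjoint)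
    then show ?thesis
      using iI shuffle_sign_insert_right_mult_singleton[OF fin iI]
        shuffle_sign_insert_left_mult_singleton[OF fin iI(1)]
      unfolding basis_interior_def
      by (cases "\<alpha> (insert i I) = 0") (simp_all add: algebra_simps)
  qed
  show ?thesis
    using K i' termwise
    unfolding K_eq wedge_insert[OF K[unfolded K_eq] i'] sum_distrib_left sum.distrib[symmetric]
    by (intro sum.neutral) auto
qed

lemma basis_interior_wedge:
  assumes "is_homogeneous k \<alpha>" "K \<subseteq> {..<n}" "i < n"
  shows "basis_interior i (wedge n \<alpha> \<beta>) K =
    wedge n (basis_interior i \<alpha>) \<beta> K + (-1) ^ k * wedge n \<alpha> (basis_interior i \<beta>) K"
proof (cases "i \<in> K")
  case True
  then show ?thesis
    using basis_interior_wedge_in[OF assms(1,2) True] by (simp add: basis_interior_def)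
next
  case False
  then show ?thesis
    using basis_interior_wedge_notin[OF assms(1) _ False] assms(2,3) by simp
qed

lemma wedge_interior_left:
  assumes "K \<subseteq> {..<n}"
  shows "wedge n (interior n X \<alpha>) \<beta> K = (\<Sum>i<n. X i * wedge n (basis_interior i \<alpha>) \<beta> K)"
proof -
  have "wedge n (interior n X \<alpha>) \<beta> K =
      (\<Sum>I\<in>Pow K. \<Sum>i<n. X i * (shuffle_sign I (K - I) * basis_interior i \<alpha> I * \<beta> (K - I)))"
    using assms unfolding wedge_def
    by (auto simp: interior_eq_sum_basis_interior sum_distrib_left sum_distrib_right mult_ac
        intro!: sum.cong)
  also have "\<dots> = (\<Sum>i<n. X i * wedge n (basis_interior i \<alpha>) \<beta> K)"
    using assms by (simp add: sum.swap[of _ "Pow K"] wedge_def sum_distrib_left)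
  finally show ?thesis .
qed

lemma wedge_interior_right:
  assumes "K \<subseteq> {..<n}"
  shows "wedge n \<alpha> (interior n X \<beta>) K = (\<Sum>i<n. X i * wedge n \<alpha> (basis_interior i \<beta>) K)"
proof -
  have "wedge n \<alpha> (interior n X \<beta>) K =
      (\<Sum>I\<in>Pow K. \<Sum>i<n. X i * (shuffle_sign I (K - I) * \<alpha> I * basis_interior i \<beta> (K - I)))"
    using assms unfolding wedge_def
    by (auto simp: interior_eq_sum_basis_interior sum_distrib_left mult_ac intro!: sum.cong)
  also have "\<dots> = (\<Sum>i<n. X i * wedge n \<alpha> (basis_interior i \<beta>) K)"
    using assms by (simp add: sum.swap[of _ "Pow K"] wedge_def sum_distrib_left)
  finally show ?thesis .
qed

lemma interior_wedge:
  assumes "is_homogeneous k \<alpha>"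
  shows "interior n X (wedge n \<alpha> \<beta>) K =
    wedge n (interior n X \<alpha>) \<beta> K + (-1) ^ k * wedge n \<alpha> (interior n X \<beta>) K"
proof (cases "K \<subseteq> {..<n}")
  case True
  then show ?thesis
    using basis_interior_wedge[OF assms True]
    by (simp add: interior_eq_sum_basis_interior wedge_interior_left wedge_interior_right
        distrib_left sum.distrib sum_distrib_left mult_ac)
next
  case False
  then show ?thesis
    by (simp add: interior_def wedge_def)
qed

lemma basis_interior_anticommute:
  assumes "finite K"
  shows "basis_interior j (basis_interior i \<alpha>) K = - basis_interior i (basis_interior j \<alpha>) K"
proof (cases "i \<in> K \<or> j \<in> K \<or> i = j")
  case True
  then show ?thesis
    by (auto simp: basis_interior_def)
next
  case False
  then have "shuffle_sign {j} K * shuffle_sign {i} (insert j K)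
      = - (shuffle_sign {i} K * shuffle_sign {j} (insert i K))"
    using assms shuffle_sign_insert_right[of "{i}" K j] shuffle_sign_insert_right[of "{j}" K i]
    by (auto simp: shuffle_sign_singletons)
  moreover have "insert i (insert j K) = insert j (insert i K)"
    by blast
  ultimately show ?thesis
    using False by (simp add: basis_interior_def flip: mult.assoc)
qed

lemma basis_interior_interior:
  assumes "K \<subseteq> {..<n}" "j < n"
  shows "basis_interior j (interior n X \<alpha>) K = (\<Sum>i<n. X i * basis_interior j (basis_interior i \<alpha>) K)"
proof (cases "j \<in> K")
  case True
  then show ?thesis
    by (simp add: basis_interior_def)
next
  case False
  moreover have "insert j K \<subseteq> {..<n}"
    using assms by simp
  ultimately show ?thesis
    by (simp add: basis_interior_def[of j] interior_eq_sum_basis_interior sum_distrib_left mult_ac)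
qed

lemma interior_interior:
  "interior n Y (interior n X \<alpha>) K = - interior n X (interior n Y \<alpha>) K"
proof (cases "K \<subseteq> {..<n}")
  case True
  then have fin: "finite K"
    using finite_subset[OF _ finite_lessThan] by blast
  have "interior n Y (interior n X \<alpha>) K =
      (\<Sum>j<n. \<Sum>i<n. Y j * X i * basis_interior j (basis_interior i \<alpha>) K)"
    using True by (simp add: interior_eq_sum_basis_interior basis_interior_interior
        sum_distrib_left mult_ac)
  also have "\<dots> = (\<Sum>j<n. \<Sum>i<n. - (X i * Y j * basis_interior i (basis_interior j \<alpha>) K))"
    by (intro sum.cong refl) (subst basis_interior_anticommute[OF fin], simp)
  also have "\<dots> = - (\<Sum>j<n. \<Sum>i<n. X i * Y j * basis_interior i (basis_interior j \<alpha>) K)"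
    by (simp only: sum_negf)
  also have "\<dots> = - (\<Sum>i<n. \<Sum>j<n. X i * Y j * basis_interior i (basis_interior j \<alpha>) K)"
    by (rule arg_cong[where f = uminus]) (rule sum.swap)
  also have "\<dots> = - interior n X (interior n Y \<alpha>) K"
    using True by (simp add: interior_eq_sum_basis_interior basis_interior_interior
        sum_distrib_left mult_ac)
  finally show ?thesis .
next
  case False
  then show ?thesis
    by (simp add: interior_def)
qed

lemma wedge_commute:
  assumes \<alpha>: "is_homogeneous k \<alpha>" and \<beta>: "is_homogeneous l \<beta>"
  shows "wedge n \<alpha> \<beta> K = (-1) ^ (k * l) * wedge n \<beta> \<alpha> K"
proof (cases "K \<subseteq> {..<n}")
  case True
  then have fK: "finite K"
    using finite_subset[OF _ finite_lessThan] by blast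
  have termwise: "shuffle_sign I (K - I) * \<alpha> I * \<beta> (K - I)
      = (-1) ^ (k * l) * (shuffle_sign (K - I) I * \<beta> (K - I) * \<alpha> I)"
    if I: "I \<subseteq> K" for I
  proof (cases "\<alpha> I = 0 \<or> \<beta> (K - I) = 0")
    case False
    then have "card I = k" "card (K - I) = l"
      using \<alpha> \<beta> by (auto simp: is_homogeneous_def)
    moreover have "finite I"
      using I fK finite_subset by blast
    ultimately have "shuffle_sign I (K - I) * shuffle_sign (K - I) I = (-1) ^ (k * l)"
      using shuffle_sign_swap[of I "K - I"] fK by simp
    then have "shuffle_sign I (K - I) = (-1) ^ (k * l) * shuffle_sign (K - I) I"
      by (metis mult.assoc mult.right_neutral shuffle_sign_square)
    then show ?thesis
      by (simp add: mult_ac)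
  qed auto
  have reindex: "(\<Sum>I\<in>Pow K. shuffle_sign (K - I) I * \<beta> (K - I) * \<alpha> I)
      = (\<Sum>I\<in>Pow K. shuffle_sign I (K - I) * \<beta> I * \<alpha> (K - I))"
    by (rule sum.reindex_bij_witness[where i = "\<lambda>I. K - I" and j = "\<lambda>I. K - I"])
      (auto simp: double_diff)
  have "wedge n \<alpha> \<beta> K
      = (\<Sum>I\<in>Pow K. (-1) ^ (k * l) * (shuffle_sign (K - I) I * \<beta> (K - I) * \<alpha> I))"
    using True by (simp add: wedge_def termwise)
  also have "\<dots> = (-1) ^ (k * l) * wedge n \<beta> \<alpha> K"
    using True by (simp add: wedge_def reindex sum_distrib_left[symmetric])
  finally show ?thesis .
next
  case False
  then show ?thesis
    by (simp add: wedge_def)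
qed

section \<open>Contraction with the inverse metric\<close>

lemma inverse_metric_sym:
  assumes metric: "nondeg_metric_with_inverse n g ginv" and "i < n" "j < n"
  shows "ginv i j = ginv j i"
proof -
  have inv: "(\<Sum>l<n. g a l * ginv l b) = (if a = b then 1 else 0)" if "a < n" "b < n" for a b
    using metric that unfolding nondeg_metric_with_inverse_def by blast
  have left_inv: "(\<Sum>l<n. ginv l i * g l k) = (if k = i then 1 else 0)" if "k < n" for k
  proof -
    have "(\<Sum>l<n. ginv l i * g l k) = (\<Sum>l<n. g k l * ginv l i)"
      using metric that by (intro sum.cong) (auto simp: nondeg_metric_with_inverse_def)
    then show ?thesis
      using inv[OF that \<open>i < n\<close>] by simp
  qed
  have "ginv i j = (\<Sum>k<n. if k = i then ginv k j else 0)"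
    using \<open>i < n\<close> by simp
  also have "\<dots> = (\<Sum>k<n. (\<Sum>l<n. ginv l i * g l k) * ginv k j)"
    using left_inv by (intro sum.cong) auto
  also have "\<dots> = (\<Sum>k<n. \<Sum>l<n. ginv l i * (g l k * ginv k j))"
    by (simp add: sum_distrib_right mult.assoc)
  also have "\<dots> = (\<Sum>l<n. \<Sum>k<n. ginv l i * (g l k * ginv k j))"
    by (rule sum.swap)
  also have "\<dots> = (\<Sum>l<n. if l = j then ginv l i else 0)"
    using inv \<open>j < n\<close> by (intro sum.cong) (auto simp: sum_distrib_left[symmetric])
  also have "\<dots> = ginv j i"
    using \<open>j < n\<close> by simp
  finally show ?thesis .
qed

lemma basis_interior_sum:
  "basis_interior i (\<lambda>K. \<Sum>a\<in>A. \<phi> a K) K = (\<Sum>a\<in>A. basis_interior i (\<phi> a) K)"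
  by (cases "i \<in> K") (simp_all add: basis_interior_def sum_distrib_left)

lemma basis_interior_scale: "basis_interior i (\<lambda>K. c * \<phi> K) K = c * basis_interior i \<phi> K"
  by (simp add: basis_interior_def)

lemma interior_sum: "interior n Y (\<lambda>K. \<Sum>a\<in>A. \<phi> a K) K = (\<Sum>a\<in>A. interior n Y (\<phi> a) K)"
  by (cases "K \<subseteq> {..<n}") (simp_all add: interior_eq_sum_basis_interior basis_interior_sum
      sum_distrib_left sum.swap[of _ "{..<n}" A])

lemma interior_zero: "interior n Y (\<lambda>_. 0) K = 0"
  unfolding interior_def by (auto intro: sum.neutral)

lemma interior_scale: "interior n Y (\<lambda>K. c * \<phi> K) K = c * interior n Y \<phi> K"
  by (simp add: interior_eq_sum_basis_interior basis_interior_scale sum_distrib_left mult_ac)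

lemma interior_contr_wedge:
  assumes "\<forall>L. is_homogeneous k (A L)"
  shows "interior n Y (contr_wedge n ginv A B) K =
    contr_wedge n ginv (\<lambda>L. interior n Y (A L)) B K
      + (-1) ^ k * contr_wedge n ginv A (\<lambda>L. interior n Y (B L)) K"
proof -
  have "interior n Y (contr_wedge n ginv A B) K =
      (\<Sum>L<n. \<Sum>M<n. ginv L M * interior n Y (wedge n (A L) (B M)) K)"
    by (simp add: contr_wedge_def interior_sum interior_scale)
  also have "\<dots> = (\<Sum>L<n. \<Sum>M<n. ginv L M * (wedge n (interior n Y (A L)) (B M) K
      + (-1) ^ k * wedge n (A L) (interior n Y (B M)) K))"
    by (simp add: interior_wedge[OF assms[rule_format]])
  also have "\<dots> = contr_wedge n ginv (\<lambda>L. interior n Y (A L)) B K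
      + (-1) ^ k * contr_wedge n ginv A (\<lambda>L. interior n Y (B L)) K"
    by (simp add: contr_wedge_def sum.distrib sum_distrib_left algebra_simps)
  finally show ?thesis .
qed

lemma contr_wedge_commute:
  assumes "\<forall>i<n. \<forall>j<n. ginv i j = ginv j i"
    and "\<forall>L. is_homogeneous k (A L)" and "\<forall>M. is_homogeneous l (B M)"
  shows "contr_wedge n ginv A B K = (-1) ^ (k * l) * contr_wedge n ginv B A K"
proof -
  have "contr_wedge n ginv A B K = (\<Sum>L<n. \<Sum>M<n. (-1) ^ (k * l) * (ginv M L * wedge n (B M) (A L) K))"
    unfolding contr_wedge_def using assms by (intro sum.cong refl) (simp add: wedge_commute)
  also have "\<dots> = (-1) ^ (k * l) * (\<Sum>M<n. \<Sum>L<n. ginv M L * wedge n (B M) (A L) K)"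
    by (simp add: sum_distrib_left) (rule sum.swap)
  finally show ?thesis
    by (simp add: contr_wedge_def)
qed

lemma wedge_uminus_left: "wedge n (\<lambda>K. - \<alpha> K) \<beta> K = - wedge n \<alpha> \<beta> K"
  by (simp add: wedge_def sum_negf[symmetric])

lemma contr_wedge_uminus_left:
  "contr_wedge n ginv (\<lambda>L K. - A L K) B K = - contr_wedge n ginv A B K"
  by (simp add: contr_wedge_def wedge_uminus_left sum_negf)

lemma contr_wedge_interior_left_eq_zero:
  assumes "\<forall>L. is_homogeneous k (A L)"
    and "contr_wedge n ginv A B = (\<lambda>_. 0)"
    and "contr_wedge n ginv A (\<lambda>L. interior n Y (B L)) = (\<lambda>_. 0)"
  shows "contr_wedge n ginv (\<lambda>L. interior n Y (A L)) B = (\<lambda>_. 0)"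
proof
  fix K
  have "interior n Y (contr_wedge n ginv A B) K = 0"
    using assms(2) by (simp add: interior_zero)
  then show "contr_wedge n ginv (\<lambda>L. interior n Y (A L)) B K = 0"
    using assms(3) by (simp add: interior_contr_wedge[OF assms(1)])
qed

lemma sym_antisym_triple_eq_zero:
  fixes T :: "'a \<Rightarrow> 'a \<Rightarrow> 'a \<Rightarrow> 'b::linordered_ab_group_add"
  assumes swap13: "\<And>x y z. T x y z = T z y x" and swap12: "\<And>x y z. T x y z = - T y x z"
  shows "T x y z = 0"
proof -
  have "T x y z = - T y z x"
    using swap13 swap12 by metis
  also have "\<dots> = T z x y"
    using swap13 swap12 by metis
  also have "\<dots> = - T x y z"
    using swap13 swap12 by metis
  finally show ?thesis
    by simp
qed

lemma contr_wedge_interior_interior_swap: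
  assumes ginv_sym: "\<forall>i<n. \<forall>j<n. ginv i j = ginv j i"
    and hom: "\<forall>L. is_homogeneous k (\<Phi> L)" and "even k" "k > 0"
    and vanish: "\<forall>X Z. contr_wedge n ginv (\<lambda>L. interior n X (\<Phi> L)) (\<lambda>L. interior n Z (\<Phi> L))
                        = (\<lambda>_. 0)"
  shows "contr_wedge n ginv (\<lambda>L. interior n Y (interior n X (\<Phi> L))) (\<lambda>L. interior n Z (\<Phi> L)) K
    = contr_wedge n ginv (\<lambda>L. interior n Y (interior n Z (\<Phi> L))) (\<lambda>L. interior n X (\<Phi> L)) K"
proof -
  have "\<exists>j. k = Suc (Suc (2 * j))"
    using \<open>even k\<close> \<open>k > 0\<close> by presburger
  then obtain j where k: "k = Suc (Suc (2 * j))" ..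
  have hom1: "\<forall>L. is_homogeneous (Suc (2 * j)) (interior n X (\<Phi> L))" for X
    using hom is_homogeneous_interior unfolding k by fastforce
  have hom2: "\<forall>L. is_homogeneous (2 * j) (interior n Y (interior n X (\<Phi> L)))" for X Y
    using hom1 is_homogeneous_interior by fastforce
  (* \<iota>_X \<Phi>_L has odd degree: the Leibniz rule contributes the sign -1, graded
     commutativity with the even-degree \<iota>_Y \<iota>_Z \<Phi>^L none. *)
  have signs: "(-1) ^ Suc (2 * j) = (-1 :: real)" "(-1) ^ (Suc (2 * j) * (2 * j)) = (1 :: real)"
    by (simp_all add: minus_one_power_iff)
  have "0 = interior n Y (contr_wedge n ginv (\<lambda>L. interior n X (\<Phi> L)) (\<lambda>L. interior n Z (\<Phi> L))) K"
    using vanish by (simp add: interior_zero)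
  also have "\<dots> = contr_wedge n ginv (\<lambda>L. interior n Y (interior n X (\<Phi> L))) (\<lambda>L. interior n Z (\<Phi> L)) K
      - contr_wedge n ginv (\<lambda>L. interior n X (\<Phi> L)) (\<lambda>L. interior n Y (interior n Z (\<Phi> L))) K"
    by (simp add: interior_contr_wedge[OF hom1] signs)
  also have "contr_wedge n ginv (\<lambda>L. interior n X (\<Phi> L)) (\<lambda>L. interior n Y (interior n Z (\<Phi> L))) K
      = contr_wedge n ginv (\<lambda>L. interior n Y (interior n Z (\<Phi> L))) (\<lambda>L. interior n X (\<Phi> L)) K"
    by (simp add: contr_wedge_commute[OF ginv_sym hom1 hom2] signs)
  finally show ?thesis
    by simp
qed

lemma contr_wedge_interior_interior_eq_zero:
  assumes ginv_sym: "\<forall>i<n. \<forall>j<n. ginv i j = ginv j i"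
    and hom: "\<forall>L. is_homogeneous k (\<Phi> L)" and "even k" "k > 0"
    and vanish: "\<forall>X Z. contr_wedge n ginv (\<lambda>L. interior n X (\<Phi> L)) (\<lambda>L. interior n Z (\<Phi> L))
                        = (\<lambda>_. 0)"
  shows "contr_wedge n ginv (\<lambda>L. interior n Y (interior n X (\<Phi> L))) (\<lambda>L. interior n Z (\<Phi> L))
    = (\<lambda>_. 0)"
proof
  fix K
  define T where "T X Y Z =
    contr_wedge n ginv (\<lambda>L. interior n Y (interior n X (\<Phi> L))) (\<lambda>L. interior n Z (\<Phi> L)) K"
    for X Y Z
  have "T X Y Z = T Z Y X" for X Y Z
    unfolding T_def by (rule contr_wedge_interior_interior_swap[OF assms])
  moreover have "T X Y Z = - T Y X Z" for X Y Z
  proof -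
    have "(\<lambda>L. interior n Y (interior n X (\<Phi> L))) = (\<lambda>L K. - interior n X (interior n Y (\<Phi> L)) K)"
      by (intro ext) (rule interior_interior)
    then show ?thesis
      by (simp add: T_def contr_wedge_uminus_left)
  qed
  ultimately have "T X Y Z = 0"
    by (rule sym_antisym_triple_eq_zero[of T])
  then show "contr_wedge n ginv (\<lambda>L. interior n Y (interior n X (\<Phi> L))) (\<lambda>L. interior n Z (\<Phi> L)) K
      = 0"
    by (simp add: T_def)
qed

theorem mainTheorem10:
  fixes n :: nat and g ginv :: "nat \<Rightarrow> nat \<Rightarrow> real" and F :: form
  assumes "nondeg_metric_with_inverse n g ginv"
    and "is_kform n 5 F"
    and "\<forall>X Y. contr_wedge n ginv (\<lambda>L. interior n X (F_idx n F L))
                                   (\<lambda>L. interior n Y (F_idx n F L)) = (\<lambda>_. 0)"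
    and "\<forall>X. contr_wedge n ginv (\<lambda>L. interior n X (F_idx n F L)) (F_idx n F) = (\<lambda>_. 0)"
  shows "(\<forall>X Y. contr_wedge n ginv (\<lambda>L. interior n Y (interior n X (F_idx n F L))) (F_idx n F)
                 = (\<lambda>_. 0))
       \<and> (\<forall>X Y Z. contr_wedge n ginv
                 (\<lambda>L. interior n Z (interior n Y (interior n X (F_idx n F L)))) (F_idx n F)
                 = (\<lambda>_. 0))"
proof -
  have ginv_sym: "\<forall>i<n. \<forall>j<n. ginv i j = ginv j i"
    using inverse_metric_sym[OF assms(1)] by blast
  have "is_homogeneous 5 F"
    using assms(2) by (simp add: is_kform_def is_homogeneous_def)
  then have hom4: "\<forall>L. is_homogeneous 4 (F_idx n F L)"
    using is_homogeneous_interior unfolding F_idx_def by fastforce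
  have hom3: "\<forall>L. is_homogeneous 3 (interior n X (F_idx n F L))" for X
    using hom4 is_homogeneous_interior by fastforce
  have hom2: "\<forall>L. is_homogeneous 2 (interior n Y (interior n X (F_idx n F L)))" for X Y
    using hom3 is_homogeneous_interior by fastforce
  have first: "contr_wedge n ginv (\<lambda>L. interior n Y (interior n X (F_idx n F L))) (F_idx n F)
      = (\<lambda>_. 0)" for X Y
    using contr_wedge_interior_left_eq_zero[OF hom3] assms(3,4) by blast
  have mixed: "contr_wedge n ginv (\<lambda>L. interior n Y (interior n X (F_idx n F L)))
      (\<lambda>L. interior n Z (F_idx n F L)) = (\<lambda>_. 0)" for X Y Z
    using contr_wedge_interior_interior_eq_zero[OF ginv_sym hom4] assms(3) by simp
  have second: "contr_wedge n ginv
      (\<lambda>L. interior n Z (interior n Y (interior n X (F_idx n F L)))) (F_idx n F) = (\<lambda>_. 0)"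
    for X Y Z
    by (rule contr_wedge_interior_left_eq_zero[OF hom2 first mixed])
  show ?thesis
    using first second by blast
qed

end
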